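(* Let $G$ be a complete geometric graph and $B$ a subgraph of $G$. Suppose there exist two vertices $a,b\in V(G)$ and a line $l$ such that (1) $[a,b]\notin E(B)$, and (2) $a$ and all neighbors of $b$ in $B$ lie in one open side $l^{+}$ of $l$, while $b$ and all neighbors of $a$ in $B$ lie in the other open side $l^{-}$ of $l$. Then $B$ is not a blocker for $\mathcal{T}_{\leq 3}(G)$.
   Context: A geometric graph is a graph whose vertices are points in the plane in general position (no three collinear) and whose edges are straight segments between pairs of vertices; $G$ is complete if all pairs of vertices are joined. $[a,b]$ denotes the edge (segment) joining $a$ and $b$. $\mathcal{T}_{\leq k}(G)$ denotes the family of all simple (non-crossing) spanning trees of $G$ of (graph) diameter at most $k$. A subgraph $B$ blocks a family $\mathcal{F}$ of subgraphs if it shares at least one edge with every member of $\mathcal{F}$; a blocker of $\mathcal{F}$ is a subgraph that blocks $\mathcal{F}$ and has the smallest possible number of edges among all subgraphs blocking $\mathcal{F}$. *)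

theory Defs
  imports "HOL-Analysis.Analysis"
begin

text \<open>Points of the plane are vectors in real^2. An edge is a 2-element set of vertices;
  a (sub)graph is represented by its edge set.\<close>

type_synonym pt = "real^2"
type_synonym edge = "pt set"

definition general_position :: "pt set \<Rightarrow> bool" where
  "general_position V \<longleftrightarrow>
     (\<forall>x\<in>V. \<forall>y\<in>V. \<forall>z\<in>V. x \<noteq> y \<and> y \<noteq> z \<and> x \<noteq> z \<longrightarrow> \<not> collinear {x, y, z})"

definition complete_edges :: "pt set \<Rightarrow> edge set" where
  "complete_edges V = {{x, y} | x y. x \<in> V \<and> y \<in> V \<and> x \<noteq> y}"

definition seg :: "edge \<Rightarrow> pt set" where
  "seg e = convex hull e"

definition noncrossing :: "edge set \<Rightarrow> bool" where
  "noncrossing T \<longleftrightarrow> (\<forall>e\<in>T. \<forall>f\<in>T. e \<noteq> f \<longrightarrow> seg e \<inter> seg f \<subseteq> e \<inter> f)"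

fun dist_le :: "edge set \<Rightarrow> nat \<Rightarrow> pt \<Rightarrow> pt \<Rightarrow> bool" where
  "dist_le T 0 u v \<longleftrightarrow> u = v"
| "dist_le T (Suc n) u v \<longleftrightarrow> dist_le T n u v \<or> (\<exists>w. {u, w} \<in> T \<and> dist_le T n w v)"

definition connected_on :: "pt set \<Rightarrow> edge set \<Rightarrow> bool" where
  "connected_on V T \<longleftrightarrow> (\<forall>u\<in>V. \<forall>v\<in>V. \<exists>n. dist_le T n u v)"

definition has_cycle :: "edge set \<Rightarrow> bool" where
  "has_cycle T \<longleftrightarrow> (\<exists>vs. length vs \<ge> 3 \<and> distinct vs \<and>
      (\<forall>i. Suc i < length vs \<longrightarrow> {vs ! i, vs ! Suc i} \<in> T) \<and> {last vs, hd vs} \<in> T)"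

definition spanning_tree :: "pt set \<Rightarrow> edge set \<Rightarrow> bool" where
  "spanning_tree V T \<longleftrightarrow> T \<subseteq> complete_edges V \<and> connected_on V T \<and> \<not> has_cycle T"

definition diameter_le :: "pt set \<Rightarrow> edge set \<Rightarrow> nat \<Rightarrow> bool" where
  "diameter_le V T k \<longleftrightarrow> (\<forall>u\<in>V. \<forall>v\<in>V. dist_le T k u v)"

definition trees_le :: "nat \<Rightarrow> pt set \<Rightarrow> edge set set" where
  "trees_le k V = {T. spanning_tree V T \<and> noncrossing T \<and> diameter_le V T k}"

definition blocks :: "edge set \<Rightarrow> edge set set \<Rightarrow> bool" where
  "blocks B F \<longleftrightarrow> (\<forall>T\<in>F. B \<inter> T \<noteq> {})"

definition is_blocker :: "pt set \<Rightarrow> edge set \<Rightarrow> edge set set \<Rightarrow> bool" where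
  "is_blocker V B F \<longleftrightarrow> B \<subseteq> complete_edges V \<and> blocks B F \<and>
     (\<forall>B'. B' \<subseteq> complete_edges V \<and> blocks B' F \<longrightarrow> card B \<le> card B')"

definition nbrs :: "edge set \<Rightarrow> pt \<Rightarrow> pt set" where
  "nbrs B x = {y. {x, y} \<in> B}"

end

theory Submission
  imports Defs
begin

text \<open>Split the vertices other than a and b by the line l: join those on a's side to a,
  those on b's side to b, and add the edge [a,b]. The result is a non-crossing double star
  of diameter at most 3. Since B has no edge [a,b], no B-neighbour of a lies on a's side
  and no B-neighbour of b on b's side, this tree shares no edge with B. So B does not even
  block the family; minimality of a blocker never enters.\<close>

definition double_star :: "pt set \<Rightarrow> pt set \<Rightarrow> pt \<Rightarrow> pt \<Rightarrow> edge set" where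
  "double_star V H a b =
     insert {a, b} ((\<lambda>x. {a, x}) ` (V \<inter> H - {a, b}) \<union> (\<lambda>y. {b, y}) ` (V - H - {a, b}))"

lemma dist_le_step: "{u, w} \<in> T \<Longrightarrow> dist_le T n w v \<Longrightarrow> dist_le T (Suc n) u v"
  by auto

lemma dist_le_mono: "dist_le T n u v \<Longrightarrow> n \<le> m \<Longrightarrow> dist_le T m u v"
  by (induction m) (auto simp: le_Suc_eq)

lemma connected_on_if_diameter_le: "diameter_le V T k \<Longrightarrow> connected_on V T"
  unfolding diameter_le_def connected_on_def by blast

lemma diameter_le_3_if_dominating_edge:
  assumes "{a, b} \<in> T" and "\<And>u. u \<in> V \<Longrightarrow> \<exists>h\<in>{a, b}. h = u \<or> {h, u} \<in> T"
  shows "diameter_le V T 3"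
  unfolding diameter_le_def
proof (intro ballI)
  fix u v assume "u \<in> V" "v \<in> V"
  obtain hu where hu: "hu \<in> {a, b}" "hu = u \<or> {hu, u} \<in> T"
    using assms(2) \<open>u \<in> V\<close> by blast
  obtain hv where hv: "hv \<in> {a, b}" "hv = v \<or> {hv, v} \<in> T"
    using assms(2) \<open>v \<in> V\<close> by blast
  have "dist_le T 1 hv v" using hv by auto
  moreover have "hu = hv \<or> {hu, hv} \<in> T"
    using hu(1) hv(1) assms(1) by (auto simp: insert_commute)
  ultimately have "dist_le T 2 hu v"
    by (auto simp: numeral_2_eq_2 dist_le_mono)
  show "dist_le T 3 u v"
  proof (cases "hu = u")
    case True
    then show ?thesis using \<open>dist_le T 2 hu v\<close> by (auto intro: dist_le_mono)
  next
    case False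
    then have "{u, hu} \<in> T" using hu(2) by (simp add: insert_commute)
    then have "dist_le T (Suc 2) u v" using \<open>dist_le T 2 hu v\<close> by (rule dist_le_step)
    then show ?thesis by (simp add: numeral_3_eq_3 numeral_2_eq_2 del: dist_le.simps)
  qed
qed

lemma has_cycle_imp_branching:
  assumes "has_cycle T"
  shows "\<exists>x y z. x \<notin> {a, b} \<and> y \<noteq> z \<and> {x, y} \<in> T \<and> {x, z} \<in> T"
proof -
  obtain vs where len: "length vs \<ge> 3" and dis: "distinct vs"
    and step: "\<And>i. Suc i < length vs \<Longrightarrow> {vs ! i, vs ! Suc i} \<in> T"
    and close: "{last vs, hd vs} \<in> T"
    using assms unfolding has_cycle_def by blast
  let ?n = "length vs"
  have neq: "vs ! i \<noteq> vs ! j" if "i < ?n" "j < ?n" "i \<noteq> j" for i j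
    using that by (simp add: nth_eq_iff_index_eq[OF dis])
  have e01: "{vs ! 0, vs ! 1} \<in> T" and e12: "{vs ! 1, vs ! 2} \<in> T"
    using step[of 0] step[of 1] len by (auto simp: numeral_2_eq_2)
  have "vs \<noteq> []" using len by auto
  then have e_last: "{vs ! (?n - 1), vs ! 0} \<in> T"
    using close by (simp add: hd_conv_nth last_conv_nth)
  have e2next: "{vs ! 2, vs ! (if ?n = 3 then 0 else 3)} \<in> T"
    using e_last step[of 2] len by (auto simp: numeral_3_eq_3 numeral_2_eq_2)
  have branch: "?thesis" if "x \<notin> {a, b}" "y \<noteq> z" "{y, x} \<in> T" "{x, z} \<in> T" for x y z
  proof -
    have "{x, y} \<in> T" using that(3) by (simp add: insert_commute)
    then show ?thesis using that(1,2,4) by blast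
  qed
  have d012: "vs ! 0 \<noteq> vs ! 1" "vs ! 1 \<noteq> vs ! 2" "vs ! 0 \<noteq> vs ! 2"
    using neq[of 0 1] neq[of 1 2] neq[of 0 2] len \<open>vs \<noteq> []\<close> by simp_all
  then consider "vs ! 0 \<notin> {a, b}" | "vs ! 1 \<notin> {a, b}" | "vs ! 2 \<notin> {a, b}"
    by fastforce
  then show ?thesis
  proof cases
    case 1
    have "vs ! (?n - 1) \<noteq> vs ! 1" using neq[of "?n - 1" 1] len \<open>vs \<noteq> []\<close> by simp
    then show ?thesis using branch[OF 1 _ e_last e01] by blast
  next
    case 2
    show ?thesis using branch[OF 2 d012(3) e01 e12] .
  next
    case 3
    have "vs ! 1 \<noteq> vs ! (if ?n = 3 then 0 else 3)"
      using neq[of 1 0] neq[of 1 3] len \<open>vs \<noteq> []\<close> by auto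
    then show ?thesis using branch[OF 3 _ e12 e2next] by blast
  qed
qed

lemma not_has_cycle_if_leaves:
  assumes "\<And>x y z. x \<notin> {a, b} \<Longrightarrow> {x, y} \<in> T \<Longrightarrow> {x, z} \<in> T \<Longrightarrow> y = z"
  shows "\<not> has_cycle T"
  using has_cycle_imp_branching assms by blast

lemma seg_inter_seg_common_endpoint:
  assumes "\<not> collinear {p, x, y}"
  shows "seg {p, x} \<inter> seg {p, y} \<subseteq> {p, x} \<inter> {p, y}"
proof -
  have "seg {p, x} = closed_segment x p" "seg {p, y} = closed_segment p y"
    by (simp_all add: seg_def segment_convex_hull insert_commute)
  moreover have "\<not> collinear {x, p, y}" using assms by (simp add: insert_commute)
  ultimately show ?thesis using Int_closed_segment[of p x y] by auto
qed

lemma seg_subset_convex: "convex S \<Longrightarrow> e \<subseteq> S \<Longrightarrow> seg e \<subseteq> S"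
  unfolding seg_def by (rule hull_minimal)

lemma noncrossing_if_stars_separated:
  assumes gp: "general_position V" and "a \<in> V" "b \<in> V" "a \<noteq> b"
    and disjoint: "S \<inter> S' = {}"
    and edges: "\<And>e. e \<in> T \<Longrightarrow> e = {a, b}
        \<or> (\<exists>x\<in>V - {a, b}. e = {a, x} \<and> seg e \<subseteq> S)
        \<or> (\<exists>y\<in>V - {a, b}. e = {b, y} \<and> seg e \<subseteq> S')"
  shows "noncrossing T"
proof -
  define hub_edge where "hub_edge p e \<longleftrightarrow> (\<exists>x\<in>V - {p}. e = {p, x})" for p e
  have star: "seg e \<inter> seg f \<subseteq> e \<inter> f"
    if "p \<in> V" and hubs: "hub_edge p e" "hub_edge p f" and "e \<noteq> f" for p e f
  proof -
    obtain x y where xy: "x \<in> V - {p}" "y \<in> V - {p}" "e = {p, x}" "f = {p, y}"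
      using hubs unfolding hub_edge_def by blast
    have "x \<noteq> y" using xy(3,4) \<open>e \<noteq> f\<close> by auto
    then have "\<not> collinear {p, x, y}"
      using gp[unfolded general_position_def, rule_format, of p x y] \<open>p \<in> V\<close> xy(1,2) by auto
    from seg_inter_seg_common_endpoint[OF this] show ?thesis using xy(3,4) by simp
  qed
  have apart: "seg e \<inter> seg f \<subseteq> e \<inter> f"
    if "seg e \<subseteq> S \<and> seg f \<subseteq> S' \<or> seg e \<subseteq> S' \<and> seg f \<subseteq> S" for e f
  proof -
    have "seg e \<inter> seg f = {}" using that disjoint by blast
    then show ?thesis by simp
  qed
  have classes: "hub_edge a e \<and> hub_edge b e
      \<or> hub_edge a e \<and> seg e \<subseteq> S \<or> hub_edge b e \<and> seg e \<subseteq> S'" if "e \<in> T" for e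
  proof -
    have "{a, b} = {b, a}" by (rule insert_commute)
    then show ?thesis using edges[OF that] assms(2-4) unfolding hub_edge_def by blast
  qed
  show ?thesis
    unfolding noncrossing_def
  proof (intro ballI impI)
    fix e f assume "e \<in> T" "f \<in> T" "e \<noteq> f"
    have "hub_edge a e \<and> hub_edge a f \<or> hub_edge b e \<and> hub_edge b f
        \<or> seg e \<subseteq> S \<and> seg f \<subseteq> S' \<or> seg e \<subseteq> S' \<and> seg f \<subseteq> S"
      using classes[OF \<open>e \<in> T\<close>] classes[OF \<open>f \<in> T\<close>] by blast
    then show "seg e \<inter> seg f \<subseteq> e \<inter> f"
    proof (elim disjE)
      assume "hub_edge a e \<and> hub_edge a f"
      then show ?thesis using star[OF \<open>a \<in> V\<close> _ _ \<open>e \<noteq> f\<close>] by blast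
    next
      assume "hub_edge b e \<and> hub_edge b f"
      then show ?thesis using star[OF \<open>b \<in> V\<close> _ _ \<open>e \<noteq> f\<close>] by blast
    qed (use apart in blast)+
  qed
qed

lemma double_star_subset_complete_edges:
  "a \<in> V \<Longrightarrow> b \<in> V \<Longrightarrow> a \<noteq> b \<Longrightarrow> double_star V H a b \<subseteq> complete_edges V"
  unfolding double_star_def complete_edges_def by blast

lemma diameter_le_double_star:
  assumes "a \<in> V" "b \<in> V"
  shows "diameter_le V (double_star V H a b) 3"
proof (rule diameter_le_3_if_dominating_edge)
  show "{a, b} \<in> double_star V H a b" by (simp add: double_star_def)
  fix u assume "u \<in> V"
  then show "\<exists>h\<in>{a, b}. h = u \<or> {h, u} \<in> double_star V H a b"
    unfolding double_star_def by blast
qed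

lemma double_star_leaf_edge:
  assumes "x \<notin> {a, b}" "{x, y} \<in> double_star V H a b"
  shows "y = (if x \<in> H then a else b)"
  using assms(2) unfolding double_star_def
proof (elim insertE UnE imageE)
  assume "{x, y} = {a, b}"
  then show ?thesis using assms(1) by (metis insertI1)
next
  fix x' assume "{x, y} = {a, x'}" "x' \<in> V \<inter> H - {a, b}"
  then show ?thesis using assms(1) by (auto simp: doubleton_eq_iff)
next
  fix y' assume "{x, y} = {b, y'}" "y' \<in> V - H - {a, b}"
  then show ?thesis using assms(1) by (auto simp: doubleton_eq_iff)
qed

lemma not_has_cycle_double_star: "\<not> has_cycle (double_star V H a b)"
  by (rule not_has_cycle_if_leaves[of a b]) (metis double_star_leaf_edge)

lemma noncrossing_double_star:
  assumes "general_position V" "a \<in> V" "b \<in> V"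
    and "convex H" "convex (- H)" "a \<in> H" "b \<notin> H"
  shows "noncrossing (double_star V H a b)"
proof (rule noncrossing_if_stars_separated[where S = H and S' = "- H"])
  have "seg {a, x} \<subseteq> H" if "x \<in> H" for x
    using assms(4,6) that by (intro seg_subset_convex) auto
  moreover have "seg {b, y} \<subseteq> - H" if "y \<notin> H" for y
    using assms(5,7) that by (intro seg_subset_convex) auto
  moreover fix e assume "e \<in> double_star V H a b"
  ultimately show "e = {a, b} \<or> (\<exists>x\<in>V - {a, b}. e = {a, x} \<and> seg e \<subseteq> H)
      \<or> (\<exists>y\<in>V - {a, b}. e = {b, y} \<and> seg e \<subseteq> - H)"
    unfolding double_star_def by blast
qed (use assms in auto)

lemma double_star_in_trees_le:
  assumes "general_position V" "a \<in> V" "b \<in> V"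
    and "convex H" "convex (- H)" "a \<in> H" "b \<notin> H"
  shows "double_star V H a b \<in> trees_le 3 V"
proof -
  have "a \<noteq> b" using assms(6,7) by auto
  have diam: "diameter_le V (double_star V H a b) 3"
    using assms(2,3) by (rule diameter_le_double_star)
  have "spanning_tree V (double_star V H a b)"
    unfolding spanning_tree_def
    using double_star_subset_complete_edges[OF assms(2,3) \<open>a \<noteq> b\<close>]
      connected_on_if_diameter_le[OF diam] not_has_cycle_double_star by (intro conjI)
  moreover have "noncrossing (double_star V H a b)"
    using assms by (intro noncrossing_double_star)
  ultimately show ?thesis unfolding trees_le_def using diam by (intro CollectI conjI)
qed

lemma double_star_disjoint:
  assumes "{a, b} \<notin> B" "nbrs B a \<inter> H = {}" "nbrs B b \<subseteq> H"
  shows "B \<inter> double_star V H a b = {}"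
  using assms unfolding double_star_def nbrs_def by blast

lemma not_is_blocker_if_disjoint_member:
  "T \<in> F \<Longrightarrow> B \<inter> T = {} \<Longrightarrow> \<not> is_blocker V B F"
  unfolding is_blocker_def blocks_def by blast

theorem mainTheorem7:
  fixes V :: "pt set" and B :: "edge set" and a b :: pt and w :: "real^2" and c :: real
  assumes "finite V" and "general_position V"
    and "B \<subseteq> complete_edges V"
    and "a \<in> V" and "b \<in> V"
    and "w \<noteq> 0"
    and "{a, b} \<notin> B"
    and "inner w a > c" and "\<forall>y\<in>nbrs B b. inner w y > c"
    and "inner w b < c" and "\<forall>y\<in>nbrs B a. inner w y < c"
  shows "\<not> is_blocker V B (trees_le 3 V)"
proof -
  define H where "H = {z. c \<le> inner w z}"
  have "- H = {z. inner w z < c}" by (auto simp: H_def)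
  then have "convex H" "convex (- H)"
    by (simp_all add: H_def convex_halfspace_ge convex_halfspace_lt)
  then have "double_star V H a b \<in> trees_le 3 V"
    using assms(2,4,5,8,10) by (intro double_star_in_trees_le) (auto simp: H_def)
  moreover have "B \<inter> double_star V H a b = {}"
    using assms(7,9,11) by (intro double_star_disjoint) (force simp: H_def)+
  ultimately show ?thesis by (rule not_is_blocker_if_disjoint_member)
qed

end
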